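(* For all $x,y\in\mathfrak M_{0,\mathrm{sa}}$, $\lim_{n\to\infty}\|L(F_n(x),F_n(y))\|=0$, where for $a,b\in\mathfrak M$, $L(a,b):=e^{ia}e^{ib}-e^{i(a+b)}e^{-\frac12[a,b]}$.
   Context: $\mathcal I$ is the set of finite intervals of $\mathbb Z$. $(\mathfrak M,(M_I)_{I\in\mathcal I})$ is a quasi-local algebra: unital $C^*$-algebra $\mathfrak M$, $W^*$-subalgebras $M_I$ with $M_I\subseteq M_J$ for $I\subseteq J$, $\mathfrak M_0:=\bigcup_IM_I$ dense, common unit, $M_I$ and $M_J$ commuting when $I\cap J=\varnothing$; $\mathfrak M_{0,\mathrm{sa}}$ denotes the self-adjoint elements of $\mathfrak M_0$. $\gamma:\mathbb Z\curvearrowright\mathfrak M$ is an action by $*$-automorphisms with $\gamma_j(M_I)=M_{I+j}$. $\chi$ is a $\gamma$-invariant multiplicative state ($\chi(xy)=\chi(x)\chi(y)$ for $x\in M_I,y\in M_J$, $I\cap J=\varnothing$). $(I_n)$ is an increasing sequence in $\mathcal I$ with union $\mathbb Z$, and $F_n(x)=|I_n|^{-1/2}\sum_{j\in I_n}(\gamma_j(x)-\chi(x)1)$. *)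

theory Defs
  imports "HOL-Analysis.Analysis"
begin

text \<open>The complex scalar multiplication sm and the involution st are explicit parameters.\<close>

definition cstar_algebra :: "(complex \<Rightarrow> 'a::{banach,real_normed_algebra_1} \<Rightarrow> 'a) \<Rightarrow> ('a \<Rightarrow> 'a) \<Rightarrow> bool"
  where "cstar_algebra sm st \<longleftrightarrow>
    (\<forall>(r::real) x. sm (complex_of_real r) x = r *\<^sub>R x) \<and>
    (\<forall>c d x. sm (c * d) x = sm c (sm d x)) \<and>
    (\<forall>c d x. sm (c + d) x = sm c x + sm d x) \<and>
    (\<forall>c x y. sm c (x + y) = sm c x + sm c y) \<and>
    (\<forall>c x y. sm c (x * y) = sm c x * y \<and> sm c (x * y) = x * sm c y) \<and>
    (\<forall>c x. norm (sm c x) = cmod c * norm x) \<and>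
    (\<forall>x. st (st x) = x) \<and>
    (\<forall>x y. st (x + y) = st x + st y) \<and>
    (\<forall>c x. st (sm c x) = sm (cnj c) (st x)) \<and>
    (\<forall>x y. st (x * y) = st y * st x) \<and>
    (\<forall>x. norm (st x * x) = (norm x)\<^sup>2)"

definition cstar_subalgebra :: "(complex \<Rightarrow> 'a \<Rightarrow> 'a) \<Rightarrow> ('a \<Rightarrow> 'a) \<Rightarrow> 'a::{banach,real_normed_algebra_1} set \<Rightarrow> bool"
  where "cstar_subalgebra sm st M \<longleftrightarrow>
    1 \<in> M \<and> 0 \<in> M \<and>
    (\<forall>x\<in>M. \<forall>y\<in>M. x + y \<in> M \<and> x * y \<in> M) \<and>
    (\<forall>c. \<forall>x\<in>M. sm c x \<in> M) \<and>
    (\<forall>x\<in>M. st x \<in> M) \<and>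
    closed M"

definition bdd_clinear_on :: "(complex \<Rightarrow> 'a \<Rightarrow> 'a) \<Rightarrow> 'a::real_normed_vector set \<Rightarrow> ('a \<Rightarrow> complex) \<Rightarrow> bool"
  where "bdd_clinear_on sm M f \<longleftrightarrow>
    (\<forall>x\<in>M. \<forall>y\<in>M. f (x + y) = f x + f y) \<and>
    (\<forall>c. \<forall>x\<in>M. f (sm c x) = c * f x) \<and>
    (\<exists>K. \<forall>x\<in>M. cmod (f x) \<le> K * norm x) \<and>
    (\<forall>x. x \<notin> M \<longrightarrow> f x = 0)"

definition fnorm :: "'a::real_normed_vector set \<Rightarrow> ('a \<Rightarrow> complex) \<Rightarrow> real"
  where "fnorm M f = Sup {cmod (f x) | x. x \<in> M \<and> norm x \<le> 1}"

definition dual_banach_space :: "(complex \<Rightarrow> 'a \<Rightarrow> 'a) \<Rightarrow> 'a::real_normed_vector set \<Rightarrow> bool"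
  where "dual_banach_space sm M \<longleftrightarrow>
    (\<exists>V. V \<subseteq> Collect (bdd_clinear_on sm M) \<and>
         (\<lambda>_. 0) \<in> V \<and>
         (\<forall>f\<in>V. \<forall>g\<in>V. (\<lambda>x. f x + g x) \<in> V) \<and>
         (\<forall>c. \<forall>f\<in>V. (\<lambda>x. c * f x) \<in> V) \<and>
         \<comment> \<open>the canonical map M \<rightarrow> V* is isometric ...\<close>
         (\<forall>x\<in>M. norm x = Sup {cmod (f x) | f. f \<in> V \<and> fnorm M f \<le> 1}) \<and>
         \<comment> \<open>... and onto the bounded linear functionals on V\<close>
         (\<forall>\<phi> :: ('a \<Rightarrow> complex) \<Rightarrow> complex.
            (\<forall>f\<in>V. \<forall>g\<in>V. \<phi> (\<lambda>x. f x + g x) = \<phi> f + \<phi> g) \<and>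
            (\<forall>c. \<forall>f\<in>V. \<phi> (\<lambda>x. c * f x) = c * \<phi> f) \<and>
            (\<exists>K. \<forall>f\<in>V. cmod (\<phi> f) \<le> K * fnorm M f)
            \<longrightarrow> (\<exists>x\<in>M. \<forall>f\<in>V. \<phi> f = f x)))"

text \<open>W*-subalgebra: a unital C*-subalgebra which is a W*-algebra, i.e. (Sakai)
a dual Banach space.\<close>
definition wstar_subalgebra :: "(complex \<Rightarrow> 'a \<Rightarrow> 'a) \<Rightarrow> ('a \<Rightarrow> 'a) \<Rightarrow> 'a::{banach,real_normed_algebra_1} set \<Rightarrow> bool"
  where "wstar_subalgebra sm st M \<longleftrightarrow> cstar_subalgebra sm st M \<and> dual_banach_space sm M"

definition fin_intervals :: "int set set"
  where "fin_intervals = {{a..b} | a b. a \<le> b}"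

definition quasi_local :: "(complex \<Rightarrow> 'a \<Rightarrow> 'a) \<Rightarrow> ('a \<Rightarrow> 'a) \<Rightarrow> (int set \<Rightarrow> 'a::{banach,real_normed_algebra_1} set) \<Rightarrow> bool"
  where "quasi_local sm st M \<longleftrightarrow>
    cstar_algebra sm st \<and>
    (\<forall>I\<in>fin_intervals. wstar_subalgebra sm st (M I)) \<and>
    (\<forall>I\<in>fin_intervals. \<forall>J\<in>fin_intervals. I \<subseteq> J \<longrightarrow> M I \<subseteq> M J) \<and>
    closure (\<Union>I\<in>fin_intervals. M I) = UNIV \<and>
    (\<forall>I\<in>fin_intervals. \<forall>J\<in>fin_intervals. I \<inter> J = {} \<longrightarrow>
        (\<forall>x\<in>M I. \<forall>y\<in>M J. x * y = y * x))"

definition star_automorphism :: "(complex \<Rightarrow> 'a \<Rightarrow> 'a) \<Rightarrow> ('a \<Rightarrow> 'a) \<Rightarrow> ('a::{banach,real_normed_algebra_1} \<Rightarrow> 'a) \<Rightarrow> bool"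
  where "star_automorphism sm st g \<longleftrightarrow>
    bij g \<and>
    (\<forall>x y. g (x + y) = g x + g y) \<and>
    (\<forall>x y. g (x * y) = g x * g y) \<and>
    (\<forall>c x. g (sm c x) = sm c (g x)) \<and>
    (\<forall>x. g (st x) = st (g x)) \<and>
    g 1 = 1"

definition shift_action :: "(complex \<Rightarrow> 'a \<Rightarrow> 'a) \<Rightarrow> ('a \<Rightarrow> 'a) \<Rightarrow> (int set \<Rightarrow> 'a::{banach,real_normed_algebra_1} set) \<Rightarrow> (int \<Rightarrow> 'a \<Rightarrow> 'a) \<Rightarrow> bool"
  where "shift_action sm st M \<gamma> \<longleftrightarrow>
    (\<forall>j. star_automorphism sm st (\<gamma> j)) \<and>
    \<gamma> 0 = id \<and>
    (\<forall>i j. \<gamma> (i + j) = \<gamma> i \<circ> \<gamma> j) \<and>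
    (\<forall>j. \<forall>I\<in>fin_intervals. \<gamma> j ` M I = M ((\<lambda>k. k + j) ` I))"

definition is_state :: "(complex \<Rightarrow> 'a \<Rightarrow> 'a) \<Rightarrow> ('a \<Rightarrow> 'a) \<Rightarrow> ('a::{banach,real_normed_algebra_1} \<Rightarrow> complex) \<Rightarrow> bool"
  where "is_state sm st \<omega> \<longleftrightarrow>
    (\<forall>x y. \<omega> (x + y) = \<omega> x + \<omega> y) \<and>
    (\<forall>c x. \<omega> (sm c x) = c * \<omega> x) \<and>
    (\<forall>x. \<exists>r\<ge>0. \<omega> (st x * x) = complex_of_real r) \<and>
    \<omega> 1 = 1"

definition invariant_multiplicative_state ::
  "(complex \<Rightarrow> 'a \<Rightarrow> 'a) \<Rightarrow> ('a \<Rightarrow> 'a) \<Rightarrow> (int set \<Rightarrow> 'a::{banach,real_normed_algebra_1} set) \<Rightarrow> (int \<Rightarrow> 'a \<Rightarrow> 'a) \<Rightarrow> ('a \<Rightarrow> complex) \<Rightarrow> bool"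
  where "invariant_multiplicative_state sm st M \<gamma> \<omega> \<longleftrightarrow>
    is_state sm st \<omega> \<and>
    (\<forall>j x. \<omega> (\<gamma> j x) = \<omega> x) \<and>
    (\<forall>I\<in>fin_intervals. \<forall>J\<in>fin_intervals. I \<inter> J = {} \<longrightarrow>
        (\<forall>x\<in>M I. \<forall>y\<in>M J. \<omega> (x * y) = \<omega> x * \<omega> y))"

definition local_sa :: "('a \<Rightarrow> 'a) \<Rightarrow> (int set \<Rightarrow> 'a set) \<Rightarrow> 'a set"
  where "local_sa st M = {x. x \<in> (\<Union>I\<in>fin_intervals. M I) \<and> st x = x}"

definition fluct :: "(complex \<Rightarrow> 'a \<Rightarrow> 'a) \<Rightarrow> (int \<Rightarrow> 'a \<Rightarrow> 'a) \<Rightarrow> ('a \<Rightarrow> complex) \<Rightarrow> int set \<Rightarrow> 'a \<Rightarrow> 'a::{banach,real_normed_algebra_1}"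
  where "fluct sm \<gamma> \<omega> I x = (1 / sqrt (real (card I))) *\<^sub>R (\<Sum>j\<in>I. \<gamma> j x - sm (\<omega> x) 1)"

definition Lfun :: "(complex \<Rightarrow> 'a \<Rightarrow> 'a) \<Rightarrow> 'a \<Rightarrow> 'a \<Rightarrow> 'a::{banach,real_normed_algebra_1}"
  where "Lfun sm a b = exp (sm \<i> a) * exp (sm \<i> b)
            - exp (sm \<i> (a + b)) * exp (- ((1/2) *\<^sub>R (a * b - b * a)))"

end

theory Submission
  imports Defs "HOL-Computational_Algebra.Formal_Power_Series"
begin

text \<open>With A = i a and B = i b, the exponentials e^{tA}, e^{tB}, e^{t(A+B)} and e^{t[A,B]} are
  unitary, and differentiating t \<mapsto> e^{-t(A+B)} e^{tA} e^{tB} e^{-t^2 [A,B]/2} bounds the norm of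
  L(a, b) by |[a,[a,b]]| + |[b,[a,b]]|. For a = F_n(x) and b = F_n(y) these double commutators are
  |I_n|^{-3/2} times sums over I_n^3 of double commutators of the translates gamma_j x - chi(x) and
  gamma_j y - chi(y). By locality only O(|I_n|) of these terms are nonzero, and all of them are
  uniformly bounded because *-automorphisms of a C*-algebra are contractive. Hence
  |L(F_n(x), F_n(y))| = O(|I_n|^{-1/2}).\<close>

definition commutator :: "'a::ring \<Rightarrow> 'a \<Rightarrow> 'a"
  where "commutator u v = u * v - v * u"

lemma commutator_eq_0_iff: "commutator u v = 0 \<longleftrightarrow> u * v = v * u"
  by (simp add: commutator_def)

lemma commutator_swap: "commutator v u = - commutator u v"
  by (simp add: commutator_def)

lemma commutator_minus_right: "commutator u (- v) = - commutator u v"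
  by (simp add: commutator_def)

lemma commutator_sum_left: "commutator (sum f I) v = (\<Sum>i\<in>I. commutator (f i) v)"
  by (simp add: commutator_def sum_distrib_right sum_distrib_left sum_subtractf)

lemma commutator_sum_right: "commutator u (sum f I) = (\<Sum>i\<in>I. commutator u (f i))"
  by (simp add: commutator_def sum_distrib_right sum_distrib_left sum_subtractf)

lemma commutator_scaleR_left: "commutator (r *\<^sub>R u) v = r *\<^sub>R commutator u (v::'a::real_algebra)"
  by (simp add: commutator_def algebra_simps)

lemma commutator_scaleR_right: "commutator u (r *\<^sub>R v) = r *\<^sub>R commutator u (v::'a::real_algebra)"
  by (simp add: commutator_def algebra_simps)

lemma commutator_commutator_eq_0:
  assumes "u * v = v * u" "u * w = w * u"
  shows "commutator u (commutator v w) = 0"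
proof -
  have "u * (v * w) = v * w * u" "u * (w * v) = w * v * u"
    by (metis assms mult.assoc)+
  then show ?thesis
    by (simp add: commutator_def algebra_simps)
qed

lemma norm_commutator_le: "norm (commutator u v) \<le> 2 * norm u * norm (v::'a::real_normed_algebra)"
proof -
  have "norm (commutator u v) \<le> norm (u * v) + norm (v * u)"
    unfolding commutator_def by (rule norm_triangle_ineq4)
  also have "\<dots> \<le> norm u * norm v + norm v * norm u"
    by (intro add_mono norm_mult_ineq)
  finally show ?thesis by simp
qed

lemma norm_mult3_le: "norm (a * b * c) \<le> norm a * norm b * norm (c::'a::real_normed_algebra)"
  by (metis mult_right_mono norm_ge_zero norm_mult_ineq order_trans)

section \<open>A second-order Baker-Campbell-Hausdorff estimate\<close>

lemma norm_diff_le_vector_derivative_bound: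
  fixes g :: "real \<Rightarrow> 'a::real_normed_vector"
  assumes "a \<le> b"
    and "\<And>s. s \<in> {a..b} \<Longrightarrow> (g has_vector_derivative g' s) (at s within {a..b})"
    and "\<And>s. s \<in> {a..b} \<Longrightarrow> norm (g' s) \<le> B"
  shows "norm (g b - g a) \<le> B * (b - a)"
proof -
  have "norm (g b - g a) \<le> B * norm (b - a)"
  proof (rule differentiable_bound[where f'="\<lambda>s h. h *\<^sub>R g' s"])
    fix s assume s: "s \<in> {a..b}"
    show "(g has_derivative (\<lambda>h. h *\<^sub>R g' s)) (at s within {a..b})"
      using assms(2)[OF s] by (simp add: has_vector_derivative_def)
    show "onorm (\<lambda>h::real. h *\<^sub>R g' s) \<le> B"
      using assms(3)[OF s] by (simp add: onorm_scaleR_left[OF bounded_linear_ident] onorm_id)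
  next
    show "a \<in> {a..b}" "b \<in> {a..b}"
      using assms(1) by simp_all
  qed (rule convex_real_interval)
  then show ?thesis
    using assms(1) by simp
qed

lemma exp_scaleR_comp_has_vector_derivative:
  fixes X :: "'a::{banach,real_normed_algebra_1}"
  assumes "(\<phi> has_real_derivative d) (at s within T)"
  shows "((\<lambda>s. exp (\<phi> s *\<^sub>R X)) has_vector_derivative d *\<^sub>R (exp (\<phi> s *\<^sub>R X) * X)) (at s within T)"
  using vector_diff_chain_within[OF assms[unfolded has_real_derivative_iff_has_vector_derivative]
      exp_scaleR_has_vector_derivative_right]
  by (simp add: o_def)

definition exp_contractive :: "'a::{banach,real_normed_algebra_1} \<Rightarrow> bool"
  where "exp_contractive X \<longleftrightarrow> (\<forall>t. norm (exp (t *\<^sub>R X)) \<le> 1)"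

lemma exp_contractive_scaleR: "exp_contractive X \<Longrightarrow> exp_contractive (r *\<^sub>R X)"
  by (simp add: exp_contractive_def)

lemma norm_exp_le_1: "exp_contractive X \<Longrightarrow> norm (exp X) \<le> 1"
  unfolding exp_contractive_def by (metis scaleR_one)

text \<open>Duhamel's formula for s \<mapsto> e^{sX} (Y + sD) e^{(1-s)X}, whose derivative is
  e^{sX} ([X, Y + sD] + D) e^{(1-s)X}.\<close>
lemma norm_exp_affine_conj_le:
  fixes X Y D :: "'a::{banach,real_normed_algebra_1}"
  assumes X: "exp_contractive X"
    and bound: "\<And>s. s \<in> {0..1} \<Longrightarrow> norm (commutator X (Y + s *\<^sub>R D) + D) \<le> B"
  shows "norm (exp X * (Y + D) - Y * exp X) \<le> B"
proof -
  define g where "g s = exp (s *\<^sub>R X) * (Y + s *\<^sub>R D) * exp ((1 - s) *\<^sub>R X)" for s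
  define g' where "g' s = exp (s *\<^sub>R X) * (commutator X (Y + s *\<^sub>R D) + D) * exp ((1 - s) *\<^sub>R X)" for s
  have "norm (g 1 - g 0) \<le> B * (1 - 0)"
  proof (rule norm_diff_le_vector_derivative_bound)
    fix s :: real assume s: "s \<in> {0..1}"
    have "(g has_vector_derivative
        exp (s *\<^sub>R X) * (Y + s *\<^sub>R D) * ((-1) *\<^sub>R (exp ((1 - s) *\<^sub>R X) * X))
        + (exp (s *\<^sub>R X) * D + (1 *\<^sub>R (exp (s *\<^sub>R X) * X)) * (Y + s *\<^sub>R D)) * exp ((1 - s) *\<^sub>R X))
        (at s within {0..1})"
      unfolding g_def
      by (intro has_vector_derivative_mult exp_scaleR_comp_has_vector_derivative)
        (auto intro!: derivative_eq_intros)
    also have "exp (s *\<^sub>R X) * (Y + s *\<^sub>R D) * ((-1) *\<^sub>R (exp ((1 - s) *\<^sub>R X) * X))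
        + (exp (s *\<^sub>R X) * D + (1 *\<^sub>R (exp (s *\<^sub>R X) * X)) * (Y + s *\<^sub>R D)) * exp ((1 - s) *\<^sub>R X)
      = g' s"
    proof -
      have "P * (Y + s *\<^sub>R D) * ((-1) *\<^sub>R (Q * X)) + (P * D + (1 *\<^sub>R (P * X)) * (Y + s *\<^sub>R D)) * Q
          = P * (commutator X (Y + s *\<^sub>R D) + D) * Q" if "Q * X = X * Q" for P Q
      proof -
        have "P * (Y + s *\<^sub>R D) * ((-1) *\<^sub>R (Q * X)) = - (P * (Y + s *\<^sub>R D) * X * Q)"
          using that by (simp add: mult.assoc)
        then show ?thesis
          by (simp add: commutator_def algebra_simps)
      qed
      from this[OF exp_times_scaleR_commute] show ?thesis
        unfolding g'_def .
    qed
    finally show "(g has_vector_derivative g' s) (at s within {0..1})" .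
    have "norm (g' s) \<le> norm (exp (s *\<^sub>R X)) * norm (commutator X (Y + s *\<^sub>R D) + D)
        * norm (exp ((1 - s) *\<^sub>R X))"
      unfolding g'_def by (rule norm_mult3_le)
    also have "\<dots> \<le> 1 * B * 1"
      using X bound[OF s] unfolding exp_contractive_def
      by (intro mult_mono) (auto intro: order_trans[OF norm_ge_zero])
    finally show "norm (g' s) \<le> B" by simp
  qed simp
  then show ?thesis by (simp add: g_def norm_minus_commute)
qed

lemma norm_commutator_exp_le:
  assumes "exp_contractive X"
  shows "norm (commutator (exp X) Y) \<le> norm (commutator X Y)"
  using norm_exp_affine_conj_le[OF assms, of Y 0 "norm (commutator X Y)"]
  by (simp add: commutator_def)

lemma norm_exp_conj_second_order_le:
  assumes "exp_contractive X"
  shows "norm (exp X * (Y + commutator Y X) - Y * exp X) \<le> norm (commutator X (commutator Y X))"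
proof (rule norm_exp_affine_conj_le[OF assms])
  fix s :: real assume s: "s \<in> {0..1}"
  have "commutator X (Y + s *\<^sub>R commutator Y X) + commutator Y X = s *\<^sub>R commutator X (commutator Y X)"
    by (simp add: commutator_def algebra_simps)
  then show "norm (commutator X (Y + s *\<^sub>R commutator Y X) + commutator Y X)
      \<le> norm (commutator X (commutator Y X))"
    using s by (simp add: mult_left_le_one_le)
qed

text \<open>Since bch_path A B 0 = 1, the BCH error e^A e^B - e^{A+B} e^{[A,B]/2} equals
  e^{A+B} (bch_path A B 1 - bch_path A B 0) e^{[A,B]/2}.\<close>
definition bch_path :: "'a::{banach,real_normed_algebra_1} \<Rightarrow> 'a \<Rightarrow> real \<Rightarrow> 'a"
  where "bch_path A B t = exp ((- t) *\<^sub>R (A + B)) * exp (t *\<^sub>R A) * exp (t *\<^sub>R B)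
    * exp ((- (t\<^sup>2 / 2)) *\<^sub>R commutator A B)"

lemma bch_path_derivative_algebra:
  fixes W Ua Ub E A B :: "'a::real_algebra_1"
  assumes "Ua * A = A * Ua" "Ub * B = B * Ub" "E * commutator A B = commutator A B * E"
  shows "W * Ua * Ub * ((- t) *\<^sub>R (E * commutator A B))
      + (W * Ua * (1 *\<^sub>R (Ub * B)) + (W * (1 *\<^sub>R (Ua * A)) + (-1) *\<^sub>R (W * (A + B)) * Ua) * Ub) * E
    = W * ((Ua * (B + commutator B (t *\<^sub>R A)) - B * Ua) * Ub
      + t *\<^sub>R (Ua * commutator (commutator A B) Ub)) * E"
proof -
  have "W * Ua * Ub * ((- t) *\<^sub>R (E * commutator A B)) = (- t) *\<^sub>R (W * Ua * Ub * commutator A B * E)"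
    by (simp add: assms(3) flip: mult.assoc)
  moreover have "Ua * (A * X) = A * (Ua * X)" "Ub * (B * X) = B * (Ub * X)" for X
    by (simp_all add: assms flip: mult.assoc)
  ultimately show ?thesis
    by (simp add: commutator_def algebra_simps)
qed

definition bch_path_deriv :: "'a::{banach,real_normed_algebra_1} \<Rightarrow> 'a \<Rightarrow> real \<Rightarrow> 'a"
  where "bch_path_deriv A B t = exp ((- t) *\<^sub>R (A + B))
    * ((exp (t *\<^sub>R A) * (B + commutator B (t *\<^sub>R A)) - B * exp (t *\<^sub>R A)) * exp (t *\<^sub>R B)
      + t *\<^sub>R (exp (t *\<^sub>R A) * commutator (commutator A B) (exp (t *\<^sub>R B))))
    * exp ((- (t\<^sup>2 / 2)) *\<^sub>R commutator A B)"

lemma bch_path_has_vector_derivative: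
  fixes A B :: "'a::{banach,real_normed_algebra_1}"
  shows "(bch_path A B has_vector_derivative bch_path_deriv A B t) (at t within T)"
proof -
  have "(bch_path A B has_vector_derivative
      exp ((- t) *\<^sub>R (A + B)) * exp (t *\<^sub>R A) * exp (t *\<^sub>R B)
        * ((- t) *\<^sub>R (exp ((- (t\<^sup>2 / 2)) *\<^sub>R commutator A B) * commutator A B))
      + (exp ((- t) *\<^sub>R (A + B)) * exp (t *\<^sub>R A) * (1 *\<^sub>R (exp (t *\<^sub>R B) * B))
        + (exp ((- t) *\<^sub>R (A + B)) * (1 *\<^sub>R (exp (t *\<^sub>R A) * A))
          + (-1) *\<^sub>R (exp ((- t) *\<^sub>R (A + B)) * (A + B)) * exp (t *\<^sub>R A)) * exp (t *\<^sub>R B))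
        * exp ((- (t\<^sup>2 / 2)) *\<^sub>R commutator A B)) (at t within T)"
    unfolding bch_path_def
    by (intro has_vector_derivative_mult exp_scaleR_comp_has_vector_derivative)
      (auto intro!: derivative_eq_intros simp: power2_eq_square)
  then show ?thesis
    unfolding bch_path_deriv_def
    by (simp only: bch_path_derivative_algebra[OF exp_times_scaleR_commute exp_times_scaleR_commute
          exp_times_scaleR_commute])
qed

lemma norm_exp_scaleR_conj_second_order_le:
  assumes "exp_contractive A" and "\<bar>t\<bar> \<le> 1"
  shows "norm (exp (t *\<^sub>R A) * (B + commutator B (t *\<^sub>R A)) - B * exp (t *\<^sub>R A))
    \<le> norm (commutator A (commutator A B))"
proof -
  have "norm (exp (t *\<^sub>R A) * (B + commutator B (t *\<^sub>R A)) - B * exp (t *\<^sub>R A))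
      \<le> norm (commutator (t *\<^sub>R A) (commutator B (t *\<^sub>R A)))"
    by (rule norm_exp_conj_second_order_le[OF exp_contractive_scaleR[OF assms(1)]])
  also have "commutator (t *\<^sub>R A) (commutator B (t *\<^sub>R A)) = (- t\<^sup>2) *\<^sub>R commutator A (commutator A B)"
    by (simp add: commutator_def algebra_simps power2_eq_square)
  also have "norm \<dots> \<le> norm (commutator A (commutator A B))"
    using assms(2) by (simp add: abs_square_le_1 mult_left_le_one_le)
  finally show ?thesis .
qed

lemma norm_commutator_exp_scaleR_le:
  assumes "exp_contractive B" and "\<bar>t\<bar> \<le> 1"
  shows "norm (commutator C (exp (t *\<^sub>R B))) \<le> norm (commutator B C)"
proof -
  have "norm (commutator C (exp (t *\<^sub>R B))) \<le> norm (commutator (t *\<^sub>R B) C)"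
    using norm_commutator_exp_le[OF exp_contractive_scaleR[OF assms(1), of t], of C]
    by (subst commutator_swap) simp
  also have "\<dots> \<le> norm (commutator B C)"
    using assms(2) by (simp add: commutator_scaleR_left mult_left_le_one_le)
  finally show ?thesis .
qed

lemma norm_bch_path_deriv_le:
  fixes A B :: "'a::{banach,real_normed_algebra_1}"
  assumes A: "exp_contractive A" and B: "exp_contractive B"
    and AB: "exp_contractive (A + B)" and C: "exp_contractive (commutator A B)"
    and t: "t \<in> {0..1}"
  shows "norm (bch_path_deriv A B t)
    \<le> norm (commutator A (commutator A B)) + norm (commutator B (commutator A B))"
proof -
  define C where "C = commutator A B"
  define Q where "Q = (exp (t *\<^sub>R A) * (B + commutator B (t *\<^sub>R A)) - B * exp (t *\<^sub>R A)) * exp (t *\<^sub>R B)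
      + t *\<^sub>R (exp (t *\<^sub>R A) * commutator C (exp (t *\<^sub>R B)))"
  have t1: "\<bar>t\<bar> \<le> 1"
    using t by auto
  have "norm Q \<le> norm (exp (t *\<^sub>R A) * (B + commutator B (t *\<^sub>R A)) - B * exp (t *\<^sub>R A))
        * norm (exp (t *\<^sub>R B))
      + \<bar>t\<bar> * (norm (exp (t *\<^sub>R A)) * norm (commutator C (exp (t *\<^sub>R B))))"
    unfolding Q_def
    by (rule order_trans[OF norm_triangle_ineq add_mono]) (simp_all add: norm_mult_ineq mult_left_mono)
  also have "\<dots> \<le> norm (commutator A C) * 1 + 1 * (1 * norm (commutator B C))"
    using A B t1 norm_exp_scaleR_conj_second_order_le[OF A t1, of B]
      norm_commutator_exp_scaleR_le[OF B t1, of C]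
    unfolding exp_contractive_def C_def by (intro add_mono mult_mono) auto
  finally have "norm Q \<le> norm (commutator A C) + norm (commutator B C)"
    by simp
  moreover have "norm (bch_path_deriv A B t)
      \<le> norm (exp ((- t) *\<^sub>R (A + B))) * norm Q * norm (exp ((- (t\<^sup>2 / 2)) *\<^sub>R C))"
    unfolding bch_path_deriv_def Q_def C_def by (rule norm_mult3_le)
  moreover have "\<dots> \<le> 1 * norm Q * 1"
    using norm_exp_le_1[OF exp_contractive_scaleR[OF AB, of "- t"]]
      norm_exp_le_1[OF exp_contractive_scaleR[OF C, of "- (t\<^sup>2 / 2)"]]
    unfolding C_def by (intro mult_mono) auto
  ultimately show ?thesis
    by (simp add: C_def)
qed

lemma norm_exp_mult_exp_sub_le:
  fixes A B :: "'a::{banach,real_normed_algebra_1}"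
  assumes A: "exp_contractive A" and B: "exp_contractive B"
    and AB: "exp_contractive (A + B)" and C: "exp_contractive (commutator A B)"
  shows "norm (exp A * exp B - exp (A + B) * exp ((1/2) *\<^sub>R commutator A B))
    \<le> norm (commutator A (commutator A B)) + norm (commutator B (commutator A B))"
proof -
  let ?h = "bch_path A B" and ?E = "exp ((1/2) *\<^sub>R commutator A B)"
  have exp_neg_mult: "exp (- X) * exp X = 1" for X :: 'a
    using exp_minus_inverse[of "- X"] by simp
  have "exp (A + B) * ?h 1 * ?E
      = (exp (A + B) * exp (- (A + B))) * exp A * exp B * (exp (- ((1/2) *\<^sub>R commutator A B)) * ?E)"
    by (simp add: bch_path_def mult.assoc)
  also have "\<dots> = exp A * exp B"
    by (simp only: exp_minus_inverse exp_neg_mult mult_1_left mult_1_right)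
  finally have "exp (A + B) * (?h 1 - ?h 0) * ?E = exp A * exp B - exp (A + B) * ?E"
    by (simp add: bch_path_def algebra_simps)
  moreover have "norm (exp (A + B) * (?h 1 - ?h 0) * ?E) \<le> norm (exp (A + B)) * norm (?h 1 - ?h 0) * norm ?E"
    by (rule norm_mult3_le)
  moreover have "\<dots> \<le> 1 * norm (?h 1 - ?h 0) * 1"
    using norm_exp_le_1[OF AB] norm_exp_le_1[OF exp_contractive_scaleR[OF C]]
    by (intro mult_mono) auto
  moreover have "norm (?h 1 - ?h 0)
      \<le> (norm (commutator A (commutator A B)) + norm (commutator B (commutator A B))) * (1 - 0)"
    by (rule norm_diff_le_vector_derivative_bound[OF _ bch_path_has_vector_derivative
          norm_bch_path_deriv_le[OF A B AB C]]) auto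
  ultimately show ?thesis
    by simp
qed

section \<open>Square roots by the binomial series\<close>

lemma abs_gbinomial_half_le_1: "\<bar>(1/2::real) gchoose n\<bar> \<le> 1"
proof (induction n)
  case (Suc k)
  have "real (Suc k) * ((1/2) gchoose Suc k) = (1/2 - real k) * ((1/2::real) gchoose k)"
    using gbinomial_absorption[of k "1/2::real"] gbinomial_absorb_comp[of "1/2::real" k] by simp
  then have "real (Suc k) * \<bar>(1/2) gchoose Suc k\<bar> = \<bar>1/2 - real k\<bar> * \<bar>(1/2::real) gchoose k\<bar>"
    by (metis abs_mult abs_of_nat)
  also have "\<dots> \<le> real (Suc k) * 1"
    using Suc.IH by (intro mult_mono) auto
  finally show ?case
    by (simp only: mult_le_cancel_left_pos of_nat_0_less_iff zero_less_Suc)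
qed simp

definition sqrt_one_minus_coeff :: "nat \<Rightarrow> real"
  where "sqrt_one_minus_coeff n = (-1) ^ n * ((1/2) gchoose n)"

definition sqrt_one_minus :: "'a::{banach,real_normed_algebra_1} \<Rightarrow> 'a"
  where "sqrt_one_minus u = (\<Sum>n. sqrt_one_minus_coeff n *\<^sub>R u ^ n)"

lemma summable_norm_sqrt_one_minus:
  fixes u :: "'a::{banach,real_normed_algebra_1}"
  assumes "norm u < 1"
  shows "summable (\<lambda>n. norm (sqrt_one_minus_coeff n *\<^sub>R u ^ n))"
proof (rule summable_comparison_test[OF _ summable_geometric[of "norm u"]])
  have "norm (sqrt_one_minus_coeff n *\<^sub>R u ^ n) \<le> 1 * norm u ^ n" for n
    unfolding sqrt_one_minus_coeff_def norm_scaleR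
    by (intro mult_mono norm_power_ineq) (auto simp: abs_mult abs_gbinomial_half_le_1)
  then show "\<exists>N. \<forall>n\<ge>N. norm (norm (sqrt_one_minus_coeff n *\<^sub>R u ^ n)) \<le> norm u ^ n"
    by auto
qed (use assms in simp)

text \<open>The Cauchy square of the binomial series of (1 - x)^{1/2} is the binomial series of
  (1 - x)^1, by Vandermonde's identity.\<close>
lemma sqrt_one_minus_coeff_convolution:
  "(\<Sum>i\<le>k. sqrt_one_minus_coeff i * sqrt_one_minus_coeff (k - i))
    = (if k = 0 then 1 else if k = 1 then -1 else 0)"
proof -
  have "(\<Sum>i\<le>k. sqrt_one_minus_coeff i * sqrt_one_minus_coeff (k - i))
      = (-1) ^ k * (\<Sum>i=0..k. ((1/2::real) gchoose i) * ((1/2) gchoose (k - i)))"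
  proof -
    have "sqrt_one_minus_coeff i * sqrt_one_minus_coeff (k - i)
        = ((-1) ^ i * (-1) ^ (k - i)) * (((1/2::real) gchoose i) * ((1/2) gchoose (k - i)))" for i
      by (simp add: sqrt_one_minus_coeff_def ac_simps)
    moreover have "(-1::real) ^ i * (-1) ^ (k - i) = (-1) ^ k" if "i \<le> k" for i
      using that by (simp flip: power_add)
    ultimately show ?thesis
      by (simp add: sum_distrib_left atLeast0AtMost)
  qed
  also have "\<dots> = (-1) ^ k * (1 gchoose k)"
    using gbinomial_Vandermonde[of "1/2::real" "1/2" k] by simp
  also have "(1::real) gchoose k = of_nat (1 choose k)"
    by (simp add: binomial_gbinomial)
  finally show ?thesis
    by (cases k) (auto simp: binomial_eq_0)
qed

lemma sqrt_one_minus_squared: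
  fixes u :: "'a::{banach,real_normed_algebra_1}"
  assumes "norm u < 1"
  shows "sqrt_one_minus u * sqrt_one_minus u = 1 - u"
proof -
  let ?a = "\<lambda>n. sqrt_one_minus_coeff n *\<^sub>R u ^ n"
  have "(\<lambda>k. \<Sum>i\<le>k. ?a i * ?a (k - i)) sums (sqrt_one_minus u * sqrt_one_minus u)"
    unfolding sqrt_one_minus_def
    by (rule Cauchy_product_sums[OF summable_norm_sqrt_one_minus summable_norm_sqrt_one_minus])
      (use assms in auto)
  moreover have "(\<Sum>i\<le>k. ?a i * ?a (k - i)) = (if k = 0 then 1 else if k = 1 then - u else 0)" for k
  proof -
    have "(\<Sum>i\<le>k. ?a i * ?a (k - i))
        = (\<Sum>i\<le>k. sqrt_one_minus_coeff i * sqrt_one_minus_coeff (k - i)) *\<^sub>R u ^ k"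
      by (simp add: scaleR_sum_left ac_simps flip: power_add)
    then show ?thesis
      by (simp add: sqrt_one_minus_coeff_convolution)
  qed
  then have "(\<lambda>k. \<Sum>i\<le>k. ?a i * ?a (k - i)) sums (1 - u)"
    using sums_finite[of "{0, 1}" "\<lambda>k. \<Sum>i\<le>k. ?a i * ?a (k - i)"] by simp
  ultimately show ?thesis
    by (rule sums_unique2)
qed

lemma sqrt_one_minus_commute:
  fixes u :: "'a::{banach,real_normed_algebra_1}"
  assumes "norm u < 1" and "h * u = u * h"
  shows "h * sqrt_one_minus u = sqrt_one_minus u * h"
proof -
  have sum: "summable (\<lambda>n. sqrt_one_minus_coeff n *\<^sub>R u ^ n)"
    by (rule summable_norm_cancel[OF summable_norm_sqrt_one_minus[OF assms(1)]])
  have "h * (sqrt_one_minus_coeff n *\<^sub>R u ^ n) = sqrt_one_minus_coeff n *\<^sub>R u ^ n * h" for n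
    using power_commuting_commutes[OF assms(2)[symmetric], of n] by simp
  then have "(\<Sum>n. h * (sqrt_one_minus_coeff n *\<^sub>R u ^ n)) = (\<Sum>n. sqrt_one_minus_coeff n *\<^sub>R u ^ n * h)"
    by (simp only:)
  then show ?thesis
    unfolding sqrt_one_minus_def suminf_mult[OF sum] suminf_mult2[OF sum] .
qed

lemma bounded_linear_sqrt_one_minus:
  fixes u v :: "'a::{banach,real_normed_algebra_1}"
  assumes "bounded_linear f" and "norm u < 1" and "\<And>n. f (u ^ n) = v ^ n"
  shows "f (sqrt_one_minus u) = sqrt_one_minus v"
  unfolding sqrt_one_minus_def
  using bounded_linear.suminf[OF assms(1) summable_norm_cancel[OF summable_norm_sqrt_one_minus[OF assms(2)]]]
  by (simp add: assms(3) linear.scaleR[OF bounded_linear.linear[OF assms(1)]])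

section \<open>Locality\<close>

text \<open>If the terms commute at distance > D, the summand is nonzero only when j and k
  both lie within 2D of i, so only card I * (4D + 1)^2 of the (card I)^3 terms survive.\<close>
lemma norm_sum_local_double_commutators_le:
  fixes P Q S :: "int \<Rightarrow> 'a::real_normed_algebra"
  assumes I: "finite I"
    and PQ: "\<And>i j. int D < \<bar>i - j\<bar> \<Longrightarrow> P i * Q j = Q j * P i"
    and PS: "\<And>i j. int D < \<bar>i - j\<bar> \<Longrightarrow> P i * S j = S j * P i"
    and QS: "\<And>i j. int D < \<bar>i - j\<bar> \<Longrightarrow> Q i * S j = S j * Q i"
    and bounded: "\<And>i. norm (P i) \<le> K" "\<And>i. norm (Q i) \<le> K" "\<And>i. norm (S i) \<le> K"
  shows "norm (\<Sum>i\<in>I. \<Sum>j\<in>I. \<Sum>k\<in>I. commutator (P i) (commutator (Q j) (S k)))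
    \<le> real (card I) * (4 * real D + 1)\<^sup>2 * (4 * K ^ 3)"
proof -
  define near where "near i = I \<inter> {i - 2 * int D..i + 2 * int D}" for i
  have K: "0 \<le> K"
    using bounded(1)[of 0] norm_ge_zero order_trans by blast
  have card_near: "real (card (near i)) \<le> 4 * real D + 1" for i
  proof -
    have "card (near i) \<le> card {i - 2 * int D..i + 2 * int D}"
      unfolding near_def by (rule card_mono) auto
    then show ?thesis
      by simp
  qed
  have far_zero: "commutator (P i) (commutator (Q j) (S k)) = 0"
    if "j \<notin> near i \<or> k \<notin> near i" "j \<in> I" "k \<in> I" for i j k
  proof (cases "\<bar>j - k\<bar> \<le> int D")
    case True
    with that have "int D < \<bar>i - j\<bar>" "int D < \<bar>i - k\<bar>"
      by (auto simp: near_def)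
    then show ?thesis
      by (intro commutator_commutator_eq_0 PQ PS)
  next
    case False
    then have "commutator (Q j) (S k) = 0"
      using QS by (simp add: commutator_eq_0_iff)
    then show ?thesis
      by (simp add: commutator_def)
  qed
  define c where "c i j k = commutator (P i) (commutator (Q j) (S k))" for i j k
  have restrict: "(\<Sum>j\<in>I. \<Sum>k\<in>I. c i j k) = (\<Sum>j\<in>near i. \<Sum>k\<in>near i. c i j k)" for i
  proof -
    have "(\<Sum>j\<in>I. \<Sum>k\<in>I. c i j k) = (\<Sum>(j, k)\<in>I \<times> I. c i j k)"
      by (simp add: sum.cartesian_product)
    also have "\<dots> = (\<Sum>(j, k)\<in>near i \<times> near i. c i j k)"
    proof (rule sum.mono_neutral_right)
      show "near i \<times> near i \<subseteq> I \<times> I"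
        by (auto simp: near_def)
      show "\<forall>x\<in>I \<times> I - near i \<times> near i. (case x of (j, k) \<Rightarrow> c i j k) = 0"
        using far_zero by (auto simp: c_def)
    qed (use I in simp)
    also have "\<dots> = (\<Sum>j\<in>near i. \<Sum>k\<in>near i. c i j k)"
      by (simp add: sum.cartesian_product)
    finally show ?thesis .
  qed
  have term_bound: "norm (c i j k) \<le> 4 * K ^ 3" for i j k
  proof -
    have "norm (c i j k) \<le> 2 * norm (P i) * norm (commutator (Q j) (S k))"
      unfolding c_def by (rule norm_commutator_le)
    also have "\<dots> \<le> 2 * K * (2 * K * K)"
      using bounded norm_commutator_le[of "Q j" "S k"] K
      by (intro mult_mono order_trans[OF norm_commutator_le]) (auto intro: mult_mono)
    finally show ?thesis
      by (simp add: power3_eq_cube)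
  qed
  have "norm (\<Sum>i\<in>I. \<Sum>j\<in>I. \<Sum>k\<in>I. c i j k) \<le> (\<Sum>i\<in>I. \<Sum>j\<in>near i. \<Sum>k\<in>near i. norm (c i j k))"
    unfolding restrict
    by (intro order_trans[OF norm_sum] sum_mono) (auto intro: order_trans[OF norm_sum] sum_mono)
  also have "\<dots> \<le> (\<Sum>i\<in>I. \<Sum>j\<in>near i. \<Sum>k\<in>near i. 4 * K ^ 3)"
    by (intro sum_mono term_bound)
  also have "\<dots> = (\<Sum>i\<in>I. (real (card (near i)))\<^sup>2 * (4 * K ^ 3))"
    by (simp add: power2_eq_square mult.assoc)
  also have "\<dots> \<le> (\<Sum>i\<in>I. (4 * real D + 1)\<^sup>2 * (4 * K ^ 3))"
    using card_near K by (intro sum_mono mult_right_mono power_mono) auto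
  finally show ?thesis
    by (simp add: c_def)
qed

lemma fin_intervals_finite: "I \<in> fin_intervals \<Longrightarrow> finite I"
  unfolding fin_intervals_def by auto

lemma atLeastAtMost_in_fin_intervals: "a \<le> b \<Longrightarrow> {a..b} \<in> fin_intervals"
  unfolding fin_intervals_def by auto

lemma fin_interval_subset_symmetric:
  assumes "I \<in> fin_intervals"
  shows "\<exists>D::nat. I \<subseteq> {- int D..int D}"
proof -
  obtain a b where "I = {a..b}"
    using assms unfolding fin_intervals_def by blast
  then show ?thesis
    by (intro exI[of _ "nat (max \<bar>a\<bar> \<bar>b\<bar>)"]) auto
qed

lemma finite_subset_incseq_Union:
  assumes "incseq A" and "finite F" and "F \<subseteq> (\<Union>n. A n)"
  shows "\<exists>n. F \<subseteq> A n"
  using assms(2,3)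
proof (induction F rule: finite_induct)
  case (insert x F)
  then obtain m n where "x \<in> A m" "F \<subseteq> A n"
    by auto
  then have "insert x F \<subseteq> A (max m n)"
    using monoD[OF assms(1), of m "max m n"] monoD[OF assms(1), of n "max m n"] by auto
  then show ?case ..
qed simp

lemma filterlim_card_incseq_at_top:
  fixes A :: "nat \<Rightarrow> 'a set"
  assumes "\<And>n. finite (A n)" and "incseq A" and "(\<Union>n. A n) = UNIV" and "infinite (UNIV :: 'a set)"
  shows "filterlim (\<lambda>n. real (card (A n))) at_top sequentially"
  unfolding filterlim_at_top
proof
  fix Z :: real
  obtain F :: "'a set" where F: "finite F" "card F = nat \<lceil>Z\<rceil>"
    using infinite_arbitrarily_large[OF assms(4)] by blast
  then obtain n where "F \<subseteq> A n"
    using finite_subset_incseq_Union[OF assms(2)] assms(3) by blast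
  then have "Z \<le> real (card (A m))" if "n \<le> m" for m
    using F card_mono[OF assms(1), of F m] monoD[OF assms(2) that] by (auto intro: order_trans[OF real_nat_ceiling_ge])
  then show "\<forall>\<^sub>F m in sequentially. Z \<le> real (card (A m))"
    by (rule eventually_sequentiallyI)
qed

locale cstar =
  fixes sm :: "complex \<Rightarrow> 'a::{banach,real_normed_algebra_1} \<Rightarrow> 'a"
    and st :: "'a \<Rightarrow> 'a"
  assumes cstar_algebra: "cstar_algebra sm st"
begin

lemma sm_of_real: "sm (complex_of_real r) x = r *\<^sub>R x"
  using cstar_algebra by (simp add: cstar_algebra_def)

lemma sm_mult: "sm (c * d) x = sm c (sm d x)"
  using cstar_algebra by (simp add: cstar_algebra_def)

lemma sm_add: "sm c (x + y) = sm c x + sm c y"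
  using cstar_algebra by (simp add: cstar_algebra_def)

lemma sm_mult_left: "sm c (x * y) = sm c x * y"
  using cstar_algebra by (simp add: cstar_algebra_def)

lemma sm_mult_right: "sm c (x * y) = x * sm c y"
  using cstar_algebra unfolding cstar_algebra_def by metis

lemma norm_sm: "norm (sm c x) = cmod c * norm x"
  using cstar_algebra by (simp add: cstar_algebra_def)

lemma st_st [simp]: "st (st x) = x"
  using cstar_algebra by (simp add: cstar_algebra_def)

lemma st_add: "st (x + y) = st x + st y"
  using cstar_algebra by (simp add: cstar_algebra_def)

lemma st_sm: "st (sm c x) = sm (cnj c) (st x)"
  using cstar_algebra by (simp add: cstar_algebra_def)

lemma st_mult: "st (x * y) = st y * st x"
  using cstar_algebra by (simp add: cstar_algebra_def)

lemma norm_st_mult_self: "norm (st x * x) = (norm x)\<^sup>2"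
  using cstar_algebra by (simp add: cstar_algebra_def)

lemma sm_scaleR: "sm c (r *\<^sub>R x) = r *\<^sub>R sm c x"
  by (metis sm_mult sm_of_real mult.commute)

lemma sm_minus: "sm c (- x) = - sm c x"
  using sm_scaleR[of c "-1" x] by simp

lemma sm_diff: "sm c (x - y) = sm c x - sm c y"
  using sm_add[of c x "- y"] by (simp add: sm_minus)

lemma sm_i_sm_i: "sm \<i> (sm \<i> x) = - x"
  using sm_mult[of \<i> \<i> x] sm_of_real[of "-1" x] by simp

lemma sm_i_mult_sm_i: "sm \<i> a * sm \<i> b = - (a * b)"
  by (simp flip: sm_mult_left sm_mult_right add: sm_i_sm_i)

lemma st_scaleR: "st (r *\<^sub>R x) = r *\<^sub>R st x"
  using st_sm[of "complex_of_real r" x] by (simp add: sm_of_real)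

lemma st_minus: "st (- x) = - st x"
  using st_scaleR[of "-1" x] by simp

lemma st_diff: "st (x - y) = st x - st y"
  using st_add[of x "- y"] by (simp add: st_minus)

lemma st_zero [simp]: "st 0 = 0"
  using st_scaleR[of 0 0] by simp

lemma st_sum: "st (sum f A) = (\<Sum>x\<in>A. st (f x))"
  by (induction A rule: infinite_finite_induct) (auto simp: st_add)

lemma st_one [simp]: "st 1 = 1"
  using st_mult[of "st 1" 1] by simp

lemma st_power: "st (x ^ n) = st x ^ n"
  by (induction n) (auto simp: st_mult power_commutes)

lemma norm_st [simp]: "norm (st x) = norm x"
proof -
  have le: "norm y \<le> norm (st y)" for y
  proof (cases "y = 0")
    case False
    have "(norm y)\<^sup>2 \<le> norm (st y) * norm y"
      using norm_st_mult_self[of y] norm_mult_ineq[of "st y" y] by simp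
    then show ?thesis
      using False by (simp add: power2_eq_square)
  qed simp
  show ?thesis
    using le[of x] le[of "st x"] by simp
qed

lemma bounded_linear_st: "bounded_linear st"
  by (rule bounded_linear_intro[where K=1]) (auto simp: st_add st_scaleR)

lemma st_exp: "st (exp x) = exp (st x)"
  unfolding exp_def
  by (simp add: bounded_linear.suminf[OF bounded_linear_st summable_exp_generic] st_scaleR st_power)

lemma exp_contractive_skew:
  assumes "st X = - X"
  shows "exp_contractive X"
  unfolding exp_contractive_def
proof
  fix r
  have "st (exp (r *\<^sub>R X)) * exp (r *\<^sub>R X) = 1"
    using exp_minus_inverse[of "- (r *\<^sub>R X)"] by (simp add: st_exp st_scaleR assms)
  then have "(norm (exp (r *\<^sub>R X)))\<^sup>2 = 1"
    by (simp flip: norm_st_mult_self)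
  then show "norm (exp (r *\<^sub>R X)) \<le> 1"
    by (auto simp: power2_eq_1_iff)
qed

lemma st_sm_i_selfadjoint: "st a = a \<Longrightarrow> st (sm \<i> a) = - sm \<i> a"
  using st_sm[of \<i> a] sm_mult[of "-1" \<i> a] sm_of_real[of "-1"] by simp

text \<open>The unitary is h + i (1 - h * h)^(1/2).\<close>
lemma selfadjoint_real_part_of_unitary:
  assumes h: "st h = h" and norm_h: "norm h < 1"
  obtains v where "st v * v = 1" and "v + st v = 2 *\<^sub>R h"
proof -
  have "norm (h * h) \<le> norm h * norm h"
    by (rule norm_mult_ineq)
  also have "\<dots> \<le> norm h"
    using norm_h by (intro mult_left_le_one_le) auto
  finally have norm_hh: "norm (h * h) < 1"
    using norm_h by simp
  define w where "w = sqrt_one_minus (h * h)"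
  have ww: "w * w = 1 - h * h"
    unfolding w_def by (rule sqrt_one_minus_squared[OF norm_hh])
  have hw: "h * w = w * h"
    unfolding w_def by (rule sqrt_one_minus_commute[OF norm_hh]) (simp add: mult.assoc)
  have st_w: "st w = w"
    unfolding w_def
    by (rule bounded_linear_sqrt_one_minus[OF bounded_linear_st norm_hh]) (simp add: st_power st_mult h)
  define v where "v = h + sm \<i> w"
  have st_v: "st v = h - sm \<i> w"
    using st_sm_i_selfadjoint[OF st_w] by (simp add: v_def st_add h)
  have "st v * v = h * h + (h * sm \<i> w - sm \<i> w * h) - sm \<i> w * sm \<i> w"
    unfolding st_v by (simp add: v_def algebra_simps)
  also have "h * sm \<i> w - sm \<i> w * h = 0"
    using hw by (simp flip: sm_mult_left sm_mult_right)
  finally have "st v * v = 1"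
    by (simp add: sm_i_mult_sm_i ww)
  moreover have "v + st v = 2 *\<^sub>R h"
    unfolding st_v by (simp add: v_def scaleR_2)
  ultimately show ?thesis
    using that by blast
qed

text \<open>A self-adjoint element of norm < 1 is the real part of a unitary, and
  *-homomorphisms map unitaries to unitaries.\<close>
lemma norm_star_automorphism_selfadjoint_le_1:
  assumes g: "star_automorphism sm st g" and h: "st h = h" and norm_h: "norm h < 1"
  shows "norm (g h) \<le> 1"
proof -
  have g_add: "g (x + y) = g x + g y" and g_mult: "g (x * y) = g x * g y"
    and g_st: "g (st x) = st (g x)" and g_one: "g 1 = 1" and g_sm: "g (sm c x) = sm c (g x)" for x y c
    using g unfolding star_automorphism_def by auto
  obtain v where unitary: "st v * v = 1" and real_part: "v + st v = 2 *\<^sub>R h"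
    using selfadjoint_real_part_of_unitary[OF h norm_h] .
  have "(norm (g v))\<^sup>2 = 1"
    using unitary by (metis norm_st_mult_self g_mult g_st g_one norm_one)
  then have norm_gv: "norm (g v) = 1"
    using norm_ge_zero[of "g v"] by (auto simp: power2_eq_1_iff)
  have "g v + st (g v) = g (2 *\<^sub>R h)"
    using real_part by (simp flip: g_add g_st)
  also have "\<dots> = 2 *\<^sub>R g h"
    by (metis g_sm sm_of_real)
  finally have "g h = (1/2) *\<^sub>R (g v + st (g v))"
    by simp
  then show ?thesis
    using norm_triangle_ineq[of "g v" "st (g v)"] norm_gv by simp
qed

lemma norm_star_automorphism_le:
  assumes g: "star_automorphism sm st g"
  shows "norm (g z) \<le> norm z"
proof -
  have selfadjoint: "norm (g h) \<le> norm h" if h: "st h = h" for h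
  proof (rule dense_ge)
    fix r assume r: "norm h < r"
    then have "r > 0"
      by (meson norm_ge_zero le_less_trans)
    have "g ((1/r) *\<^sub>R h) = (1/r) *\<^sub>R g h"
      using g unfolding star_automorphism_def by (metis sm_of_real)
    moreover have "norm (g ((1/r) *\<^sub>R h)) \<le> 1"
      using r \<open>r > 0\<close> by (intro norm_star_automorphism_selfadjoint_le_1[OF g]) (auto simp: st_scaleR h)
    ultimately show "norm (g h) \<le> r"
      using \<open>r > 0\<close> by (simp add: divide_le_eq)
  qed
  have "(norm (g z))\<^sup>2 = norm (g (st z * z))"
    using g unfolding star_automorphism_def by (simp add: norm_st_mult_self)
  also have "\<dots> \<le> norm (st z * z)"
    by (rule selfadjoint) (simp add: st_mult)
  also have "\<dots> = (norm z)\<^sup>2"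
    by (rule norm_st_mult_self)
  finally show ?thesis
    by (rule power2_le_imp_le) simp
qed

lemma state_selfadjoint_real:
  assumes \<omega>: "is_state sm st \<omega>" and h: "st h = h"
  shows "cnj (\<omega> h) = \<omega> h"
proof -
  have add: "\<omega> (x + y) = \<omega> x + \<omega> y" and one: "\<omega> 1 = 1"
    and pos: "\<exists>r\<ge>0. \<omega> (st x * x) = complex_of_real r" for x y
    using \<omega> unfolding is_state_def by blast+
  obtain r1 r2 where r1: "\<omega> (st (1 + h) * (1 + h)) = complex_of_real r1"
    and r2: "\<omega> (st h * h) = complex_of_real r2"
    using pos by meson
  have "st (1 + h) * (1 + h) = 1 + (h + (h + st h * h))"
    by (simp add: st_add h algebra_simps)
  then have "complex_of_real r1 = 1 + 2 * \<omega> h + complex_of_real r2"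
    using r1 r2 by (simp add: add one add.assoc)
  then have "Im (\<omega> h) = 0"
    by (simp add: complex_eq_iff)
  then show ?thesis
    by (simp add: complex_eq_iff)
qed

text \<open>With A = i a and B = i b, L(a, b) is the error term of the second-order
  Baker-Campbell-Hausdorff formula, and all exponentials involved are unitary.\<close>
lemma norm_Lfun_le:
  assumes a: "st a = a" and b: "st b = b"
  shows "norm (Lfun sm a b)
    \<le> norm (commutator a (commutator a b)) + norm (commutator b (commutator a b))"
proof -
  define A B where "A = sm \<i> a" and "B = sm \<i> b"
  have AB: "commutator A B = - commutator a b"
    by (simp add: A_def B_def commutator_def sm_i_mult_sm_i)
  have sm_i_commutator: "commutator (sm \<i> x) y = sm \<i> (commutator x y)" for x y
    by (simp add: commutator_def sm_diff flip: sm_mult_left sm_mult_right)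
  have "Lfun sm a b = exp A * exp B - exp (A + B) * exp ((1/2) *\<^sub>R commutator A B)"
    unfolding AB unfolding Lfun_def A_def B_def sm_add by (simp add: commutator_def algebra_simps)
  also have "norm \<dots> \<le> norm (commutator A (commutator A B)) + norm (commutator B (commutator A B))"
  proof (rule norm_exp_mult_exp_sub_le)
    show "exp_contractive A" "exp_contractive B" "exp_contractive (A + B)"
      using st_sm_i_selfadjoint[of "a + b"] by (auto intro!: exp_contractive_skew
          simp: A_def B_def st_sm_i_selfadjoint a b st_add sm_add)
    show "exp_contractive (commutator A B)"
      unfolding AB by (rule exp_contractive_skew) (simp add: commutator_def st_minus st_diff st_mult a b)
  qed
  also have "\<dots> = norm (commutator a (commutator a b)) + norm (commutator b (commutator a b))"
    unfolding AB unfolding A_def B_def sm_i_commutator by (simp add: commutator_minus_right sm_minus norm_sm)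
  finally show ?thesis .
qed

lemma sm_one_commute: "sm c 1 * z = z * sm c 1"
  by (metis sm_mult_left sm_mult_right mult_1_left mult_1_right)

lemma commute_diff_sm_one:
  assumes "u * v = v * u"
  shows "(u - sm a 1) * (v - sm b 1) = (v - sm b 1) * (u - sm a 1)"
  using assms sm_one_commute[of a v] sm_one_commute[of b u] sm_one_commute[of a "sm b 1"]
  by (simp add: algebra_simps)

lemma norm_Lfun_normalized_sums_le:
  assumes I: "finite I"
    and sa: "\<And>i. st (X i) = X i" "\<And>i. st (Y i) = Y i"
    and XX: "\<And>i j. int D < \<bar>i - j\<bar> \<Longrightarrow> X i * X j = X j * X i"
    and XY: "\<And>i j. int D < \<bar>i - j\<bar> \<Longrightarrow> X i * Y j = Y j * X i"
    and YY: "\<And>i j. int D < \<bar>i - j\<bar> \<Longrightarrow> Y i * Y j = Y j * Y i"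
    and bounded: "\<And>i. norm (X i) \<le> K" "\<And>i. norm (Y i) \<le> K"
  shows "norm (Lfun sm ((1 / sqrt (card I)) *\<^sub>R sum X I) ((1 / sqrt (card I)) *\<^sub>R sum Y I))
    \<le> 8 * (4 * real D + 1)\<^sup>2 * K ^ 3 / sqrt (card I)"
proof -
  define s where "s = 1 / sqrt (card I)"
  have "0 \<le> s"
    by (simp add: s_def)
  have YX: "Y i * X j = X j * Y i" if "int D < \<bar>i - j\<bar>" for i j
    using XY[of j i] that by (simp add: abs_minus_commute)
  have triple: "commutator (s *\<^sub>R sum P I) (commutator (s *\<^sub>R sum X I) (s *\<^sub>R sum Y I))
      = (s ^ 3) *\<^sub>R (\<Sum>i\<in>I. \<Sum>j\<in>I. \<Sum>k\<in>I. commutator (P i) (commutator (X j) (Y k)))" for P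
    by (simp only: commutator_scaleR_left commutator_scaleR_right commutator_sum_left,
        simp only: commutator_sum_right) (simp add: scaleR_sum_right power3_eq_cube mult.assoc)
  have "norm (Lfun sm (s *\<^sub>R sum X I) (s *\<^sub>R sum Y I))
      \<le> norm (commutator (s *\<^sub>R sum X I) (commutator (s *\<^sub>R sum X I) (s *\<^sub>R sum Y I)))
        + norm (commutator (s *\<^sub>R sum Y I) (commutator (s *\<^sub>R sum X I) (s *\<^sub>R sum Y I)))"
    by (rule norm_Lfun_le) (simp_all add: st_scaleR st_sum sa)
  also have "\<dots> \<le> s ^ 3 * (real (card I) * (4 * real D + 1)\<^sup>2 * (4 * K ^ 3))
      + s ^ 3 * (real (card I) * (4 * real D + 1)\<^sup>2 * (4 * K ^ 3))"
    unfolding triple norm_scaleR abs_of_nonneg[OF zero_le_power[OF \<open>0 \<le> s\<close>, of 3]]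
  proof (intro add_mono mult_left_mono)
    show "norm (\<Sum>i\<in>I. \<Sum>j\<in>I. \<Sum>k\<in>I. commutator (X i) (commutator (X j) (Y k)))
        \<le> real (card I) * (4 * real D + 1)\<^sup>2 * (4 * K ^ 3)"
      by (rule norm_sum_local_double_commutators_le[OF I XX XY XY bounded(1,1,2)])
    show "norm (\<Sum>i\<in>I. \<Sum>j\<in>I. \<Sum>k\<in>I. commutator (Y i) (commutator (X j) (Y k)))
        \<le> real (card I) * (4 * real D + 1)\<^sup>2 * (4 * K ^ 3)"
      by (rule norm_sum_local_double_commutators_le[OF I YX YY XY bounded(2,1,2)])
  qed (simp_all add: \<open>0 \<le> s\<close>)
  also have "\<dots> = 8 * (4 * real D + 1)\<^sup>2 * K ^ 3 * (s ^ 3 * real (card I))"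
    by (simp add: algebra_simps)
  also have "s ^ 3 * real (card I) = 1 / sqrt (card I)"
    by (cases "card I = 0") (simp_all add: s_def power3_eq_cube field_simps)
  finally show ?thesis
    by (simp add: s_def)
qed

end

locale quasi_local_dynamics =
  fixes sm :: "complex \<Rightarrow> 'a::{banach,real_normed_algebra_1} \<Rightarrow> 'a"
    and st :: "'a \<Rightarrow> 'a"
    and M :: "int set \<Rightarrow> 'a set"
    and \<gamma> :: "int \<Rightarrow> 'a \<Rightarrow> 'a"
    and \<omega> :: "'a \<Rightarrow> complex"
  assumes quasi_local: "quasi_local sm st M"
    and shift_action: "shift_action sm st M \<gamma>"
    and state: "is_state sm st \<omega>"

sublocale quasi_local_dynamics \<subseteq> cstar sm st
  using quasi_local by unfold_locales (simp add: quasi_local_def)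

context quasi_local_dynamics
begin

definition centered :: "int \<Rightarrow> 'a \<Rightarrow> 'a"
  where "centered j x = \<gamma> j x - sm (\<omega> x) 1"

lemma star_automorphism_shift: "star_automorphism sm st (\<gamma> j)"
  using shift_action by (simp add: shift_action_def)

lemma centered_selfadjoint:
  assumes "st x = x"
  shows "st (centered j x) = centered j x"
proof -
  have "st (\<gamma> j x) = \<gamma> j x"
    using star_automorphism_shift assms by (metis star_automorphism_def)
  then show ?thesis
    using state_selfadjoint_real[OF state assms]
    by (simp add: centered_def st_diff st_sm)
qed

lemma norm_centered_le: "norm (centered j x) \<le> norm x + cmod (\<omega> x)"
proof -
  have "norm (centered j x) \<le> norm (\<gamma> j x) + norm (sm (\<omega> x) 1)"
    unfolding centered_def by (rule norm_triangle_ineq4)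
  also have "\<dots> \<le> norm x + cmod (\<omega> x)"
    using norm_star_automorphism_le[OF star_automorphism_shift, of j x] by (simp add: norm_sm)
  finally show ?thesis .
qed

lemma M_mono: "I \<in> fin_intervals \<Longrightarrow> J \<in> fin_intervals \<Longrightarrow> I \<subseteq> J \<Longrightarrow> M I \<subseteq> M J"
  using quasi_local by (simp add: quasi_local_def)

lemma M_commute:
  assumes "I \<in> fin_intervals" and "J \<in> fin_intervals" and "I \<inter> J = {}"
    and "u \<in> M I" and "v \<in> M J"
  shows "u * v = v * u"
proof -
  have "\<forall>I\<in>fin_intervals. \<forall>J\<in>fin_intervals. I \<inter> J = {} \<longrightarrow> (\<forall>x\<in>M I. \<forall>y\<in>M J. x * y = y * x)"
    using quasi_local unfolding quasi_local_def by (elim conjE) assumption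
  then show ?thesis
    using assms by blast
qed

lemma local_sa_common_interval:
  assumes "x \<in> local_sa st M" and "y \<in> local_sa st M"
  obtains D :: nat where "x \<in> M {- int D..int D}" "y \<in> M {- int D..int D}"
proof -
  have "\<exists>D::nat. \<forall>D'\<ge>D. z \<in> M {- int D'..int D'}" if z: "z \<in> local_sa st M" for z
  proof -
    obtain I where I: "I \<in> fin_intervals" "z \<in> M I"
      using z unfolding local_sa_def by blast
    obtain D :: nat where D: "I \<subseteq> {- int D..int D}"
      using fin_interval_subset_symmetric[OF I(1)] by blast
    have "z \<in> M {- int D'..int D'}" if "D \<le> D'" for D'
    proof -
      have "I \<subseteq> {- int D'..int D'}"
        using D that by force
      then show ?thesis
        using M_mono[OF I(1) atLeastAtMost_in_fin_intervals] I(2) by force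
    qed
    then show ?thesis
      by blast
  qed
  then obtain Dx Dy where "\<forall>D'\<ge>Dx. x \<in> M {- int D'..int D'}" "\<forall>D'\<ge>Dy. y \<in> M {- int D'..int D'}"
    using assms by meson
  then show ?thesis
    using that[of "max Dx Dy"] by simp
qed

lemma shift_mem_interval:
  assumes "x \<in> M {- int D..int D}"
  shows "\<gamma> j x \<in> M {j - int D..j + int D}"
proof -
  have "\<gamma> j ` M {- int D..int D} = M {- int D + j..int D + j}"
    using shift_action atLeastAtMost_in_fin_intervals[of "- int D" "int D"]
    by (simp add: shift_action_def)
  then show ?thesis
    using assms by (auto simp: add.commute)
qed

lemma centered_commute:
  assumes "x \<in> M {- int D..int D}" and "y \<in> M {- int D..int D}" and "2 * int D < \<bar>i - k\<bar>"
  shows "centered i x * centered k y = centered k y * centered i x"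
  unfolding centered_def
proof (rule commute_diff_sm_one)
  have "{i - int D..i + int D} \<inter> {k - int D..k + int D} = {}"
    using assms(3) by auto
  then show "\<gamma> i x * \<gamma> k y = \<gamma> k y * \<gamma> i x"
    using M_commute[of "{i - int D..i + int D}" "{k - int D..k + int D}" "\<gamma> i x" "\<gamma> k y"]
      shift_mem_interval[OF assms(1)] shift_mem_interval[OF assms(2)]
    by (simp add: atLeastAtMost_in_fin_intervals)
qed

lemma norm_Lfun_fluct_le:
  assumes "x \<in> local_sa st M" and "y \<in> local_sa st M"
  obtains K where "\<And>I. I \<in> fin_intervals \<Longrightarrow>
    norm (Lfun sm (fluct sm \<gamma> \<omega> I x) (fluct sm \<gamma> \<omega> I y)) \<le> K / sqrt (card I)"
proof -
  obtain D where xy: "x \<in> M {- int D..int D}" "y \<in> M {- int D..int D}"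
    using local_sa_common_interval[OF assms] .
  have sa: "st x = x" "st y = y"
    using assms by (simp_all add: local_sa_def)
  define K where "K = max (norm x + cmod (\<omega> x)) (norm y + cmod (\<omega> y))"
  have "norm (centered i z) \<le> K" if "z = x \<or> z = y" for i z
    using that by (auto simp: K_def intro: order_trans[OF norm_centered_le])
  then have "norm (Lfun sm (fluct sm \<gamma> \<omega> I x) (fluct sm \<gamma> \<omega> I y))
      \<le> 8 * (4 * real (2 * D) + 1)\<^sup>2 * K ^ 3 / sqrt (card I)" if "I \<in> fin_intervals" for I
    unfolding fluct_def centered_def[symmetric]
    by (intro norm_Lfun_normalized_sums_le fin_intervals_finite[OF that] centered_selfadjoint sa
        centered_commute) (use xy in auto)
  then show ?thesis
    using that by blast
qed

end

theorem lemmaA3: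
  fixes sm :: "complex \<Rightarrow> 'a::{banach,real_normed_algebra_1} \<Rightarrow> 'a"
    and st :: "'a \<Rightarrow> 'a"
    and M :: "int set \<Rightarrow> 'a set"
    and \<gamma> :: "int \<Rightarrow> 'a \<Rightarrow> 'a"
    and \<omega> :: "'a \<Rightarrow> complex"
    and In :: "nat \<Rightarrow> int set"
    and x y :: 'a
  assumes "quasi_local sm st M"
    and "shift_action sm st M \<gamma>"
    and "invariant_multiplicative_state sm st M \<gamma> \<omega>"
    and "\<forall>n. In n \<in> fin_intervals"
    and "incseq In"
    and "(\<Union>n. In n) = UNIV"
    and "x \<in> local_sa st M" and "y \<in> local_sa st M"
  shows "(\<lambda>n. norm (Lfun sm (fluct sm \<gamma> \<omega> (In n) x) (fluct sm \<gamma> \<omega> (In n) y))) \<longlonglongrightarrow> 0"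
proof -
  interpret quasi_local_dynamics sm st M \<gamma> \<omega>
    using assms(1-3) by unfold_locales (simp_all add: invariant_multiplicative_state_def)
  obtain K where K: "\<And>I. I \<in> fin_intervals \<Longrightarrow>
      norm (Lfun sm (fluct sm \<gamma> \<omega> I x) (fluct sm \<gamma> \<omega> I y)) \<le> K / sqrt (card I)"
    using norm_Lfun_fluct_le[OF assms(7,8)] by blast
  have "filterlim (\<lambda>n. real (card (In n))) at_top sequentially"
    using assms(4-6) by (intro filterlim_card_incseq_at_top fin_intervals_finite) auto
  then have "(\<lambda>n. K / sqrt (card (In n))) \<longlonglongrightarrow> 0"
    by (intro real_tendsto_divide_at_top[OF tendsto_const] filterlim_compose[OF sqrt_at_top])
  then show ?thesis
    by (rule Lim_null_comparison[rotated]) (use K assms(4) in auto)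
qed

end
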